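(* Let $p$ be a prime, $s,m$ positive integers, $n=sm$, $c\in\mathbb{F}_{p^s}$, and $F\in\mathbb{F}_{p^s}[x]$ viewed as a function $\mathbb{F}_{p^n}\to\mathbb{F}_{p^n}$. Let $a,b\in\mathbb{F}_{p^s}$, with $a\neq 0$ if $c=1$. (i) If $F$ is PcN, then the equation $F(x+a)-cF(x)=b$ has no solution $x\in\mathbb{F}_{p^n}\setminus\mathbb{F}_{p^s}$. (ii) If $F$ is APcN and $m$ is odd, then the equation $F(x+a)-cF(x)=b$ has no solution $x\in\mathbb{F}_{p^n}\setminus\mathbb{F}_{p^s}$.
   Context: For $F:\mathbb{F}_{p^n}\to\mathbb{F}_{p^n}$ and $c\in\mathbb{F}_{p^n}$, let ${}_c\Delta_F(a,b)=\#\{x\in\mathbb{F}_{p^n}: F(x+a)-cF(x)=b\}$ and $\delta_{F,c}=\max\{{}_c\Delta_F(a,b): a,b\in\mathbb{F}_{p^n},\ a\neq 0\text{ if } c=1\}$. $F$ is perfect $c$-nonlinear (PcN) if $\delta_{F,c}=1$ and almost perfect $c$-nonlinear (APcN) if $\delta_{F,c}=2$. *)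

theory Defs
  imports "HOL-Computational_Algebra.Polynomial" "HOL-Library.Cardinality"
begin

definition c_Delta :: "('a::field \<Rightarrow> 'a) \<Rightarrow> 'a \<Rightarrow> 'a \<Rightarrow> 'a \<Rightarrow> nat" where
  "c_Delta f c a b = card {x. f (x + a) - c * f x = b}"

definition c_delta :: "('a::{field,finite} \<Rightarrow> 'a) \<Rightarrow> 'a \<Rightarrow> nat" where
  "c_delta f c = Max {c_Delta f c a b | a b. \<not> (c = 1 \<and> a = 0)}"

definition PcN :: "('a::{field,finite} \<Rightarrow> 'a) \<Rightarrow> 'a \<Rightarrow> bool" where
  "PcN f c \<longleftrightarrow> c_delta f c = 1"

definition APcN :: "('a::{field,finite} \<Rightarrow> 'a) \<Rightarrow> 'a \<Rightarrow> bool" where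
  "APcN f c \<longleftrightarrow> c_delta f c = 2"

definition subfield_of_order :: "nat \<Rightarrow> 'a::field set" where
  "subfield_of_order q = {x. x ^ q = x}"

end

theory Submission
  imports Defs "HOL-Computational_Algebra.Primes"
begin

text \<open>
  Write \<open>q = p^s\<close>. The Frobenius map \<open>x \<mapsto> x^q\<close> is an injective ring endomorphism
  fixing \<open>a\<close>, \<open>b\<close>, \<open>c\<close> and the coefficients of \<open>F\<close>, so it maps solutions of
  \<open>F(x + a) - c F(x) = b\<close> to solutions. A solution \<open>x\<close> outside the subfield of order \<open>q\<close>
  thus yields a second solution \<open>x^q \<noteq> x\<close>, contradicting perfect \<open>c\<close>-nonlinearity.
  If \<open>m\<close> is odd, \<open>x^(q^2) = x\<close> together with \<open>x^(q^m) = x\<close> would force \<open>x^q = x\<close>, so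
  \<open>x\<close>, \<open>x^q\<close>, \<open>x^(q^2)\<close> are three distinct solutions, contradicting almost perfect
  \<open>c\<close>-nonlinearity.
\<close>

text \<open>
  The library's \<open>finite_field_power_card_eq_same\<close> is stated for the sort \<open>finite_field\<close>,
  which cannot be obtained for a type variable of sort \<open>{field, finite}\<close>.
\<close>
lemma power_card_eq_self:
  fixes x :: "'a::{field,finite}"
  shows "x ^ CARD('a) = x"
proof (cases "x = 0")
  case True
  then show ?thesis by simp
next
  case False
  let ?U = "UNIV - {0} :: 'a set"
  have "bij_betw ((*) x) ?U ?U"
    by (rule bij_betw_byWitness[where f' = "\<lambda>y. y / x"]) (use False in auto)
  then have "(\<Prod>y\<in>?U. x * y) = \<Prod>?U"
    by (rule prod.reindex_bij_betw[where g = "\<lambda>y. y"])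
  moreover have "(\<Prod>y\<in>?U. x * y) = x ^ card ?U * \<Prod>?U"
    by (simp add: prod.distrib)
  moreover have "\<Prod>?U \<noteq> 0"
    by simp
  ultimately have "x ^ card ?U = 1"
    by (metis mult_cancel_right2)
  moreover have "CARD('a) = Suc (card ?U)"
    using finite_UNIV_card_ge_0[where 'a = 'a] by (simp add: card_Diff_singleton)
  ultimately show ?thesis
    by (metis mult.right_neutral power_Suc)
qed

lemma of_nat_CARD_eq_0: "of_nat CARD('a::{ring_1,finite}) = (0::'a)"
proof -
  have "(\<Sum>y\<in>UNIV. y) = (\<Sum>y\<in>UNIV. 1 + y :: 'a)"
    by (rule sum.reindex_bij_witness[where i = "\<lambda>y. 1 + y" and j = "\<lambda>y. y - 1"]) auto
  then show ?thesis
    by (simp add: sum.distrib)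
qed

lemma CHAR_eq_if_CARD_eq_prime_power:
  assumes "prime p" and "CARD('a::{field,finite}) = p ^ k"
  shows "CHAR('a) = p"
proof -
  have "prime CHAR('a)"
    by (simp add: finite_imp_CHAR_pos prime_CHAR_semidom)
  moreover have "of_nat (p ^ k) = (0::'a)"
    using of_nat_CARD_eq_0[where 'a = 'a] assms(2) by simp
  then have "CHAR('a) dvd p ^ k"
    by (simp only: of_nat_eq_0_iff_char_dvd)
  ultimately show ?thesis
    using assms(1) prime_dvd_power primes_dvd_imp_eq by blast
qed

lemma freshmans_dream_diff':
  fixes x y :: "'a::comm_ring_1"
  assumes "prime CHAR('a)" and "q = CHAR('a) ^ k"
  shows "(x - y) ^ q = x ^ q - y ^ q"
proof -
  have "x ^ q = (x - y) ^ q + y ^ q"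
    using freshmans_dream'[OF assms, of "x - y" y] by simp
  then show ?thesis
    by (simp add: algebra_simps)
qed

lemma power_CHAR_power_inject:
  fixes x y :: "'a::idom"
  assumes "prime CHAR('a)" and "q = CHAR('a) ^ k" and "x ^ q = y ^ q"
  shows "x = y"
proof -
  have "(x - y) ^ q = 0"
    using assms by (simp add: freshmans_dream_diff')
  then show ?thesis
    by simp
qed

lemma poly_power_CHAR_power:
  fixes F :: "'a::comm_ring_1 poly"
  assumes "prime CHAR('a)" and "q = CHAR('a) ^ k"
    and "\<forall>i. coeff F i ^ q = coeff F i"
  shows "poly F x ^ q = poly F (x ^ q)"
proof -
  have "poly F x ^ q = (\<Sum>i\<le>degree F. (coeff F i * x ^ i) ^ q)"
    unfolding poly_altdef by (rule freshmans_dream_sum'[OF assms(1,2)])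
  also have "\<dots> = (\<Sum>i\<le>degree F. coeff F i * (x ^ q) ^ i)"
    using assms(3) by (simp add: power_mult_distrib flip: power_mult mult.commute)
  finally show ?thesis
    by (simp add: poly_altdef)
qed

lemma c_solution_power_closed:
  fixes F :: "'a::comm_ring_1 poly"
  assumes "prime CHAR('a)" and "q = CHAR('a) ^ k"
    and "\<forall>i. coeff F i ^ q = coeff F i"
    and "c ^ q = c" and "a ^ q = a" and "b ^ q = b"
    and "poly F (x + a) - c * poly F x = b"
  shows "poly F (x ^ q + a) - c * poly F (x ^ q) = b"
proof -
  have "(poly F (x + a) - c * poly F x) ^ q = b ^ q"
    using assms(7) by simp
  then show ?thesis
    using assms(4-6)
    by (simp add: freshmans_dream_diff'[OF assms(1,2)]
        freshmans_dream'[OF assms(1,2)] power_mult_distrib poly_power_CHAR_power[OF assms(1-3)])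
qed

lemma power_eq_self_if_odd_period:
  fixes x :: "'a::monoid_mult"
  assumes "x ^ (q ^ m) = x" and "odd m" and "x ^ (q ^ 2) = x"
  shows "x ^ q = x"
proof -
  have even_period: "x ^ (q ^ (2 * j)) = x" for j
  proof (induction j)
    case (Suc j)
    have "x ^ (q ^ (2 * Suc j)) = x ^ (q ^ (2 * j) * q ^ 2)"
      by (simp add: power2_eq_square mult_ac)
    also have "\<dots> = (x ^ (q ^ (2 * j))) ^ (q ^ 2)"
      by (rule power_mult)
    finally show ?case
      using Suc.IH assms(3) by simp
  qed simp
  obtain k where "m = Suc (2 * k)"
    using \<open>odd m\<close> by (metis oddE Suc_eq_plus1)
  then have "x ^ (q ^ m) = x ^ (q ^ (2 * k) * q)"
    by (simp add: mult.commute)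
  also have "\<dots> = x ^ q"
    by (simp only: power_mult[of x] even_period)
  finally show ?thesis
    using assms(1) by simp
qed

lemma card_power_orbit_eq_3:
  fixes x :: "'a::idom"
  assumes "prime CHAR('a)" and "q = CHAR('a) ^ k"
    and "x ^ (q ^ m) = x" and "odd m" and "x ^ q \<noteq> x"
  shows "card {x, x ^ q, (x ^ q) ^ q} = 3"
proof -
  have "(x ^ q) ^ q \<noteq> x"
  proof
    assume "(x ^ q) ^ q = x"
    then have "x ^ (q ^ 2) = x"
      by (simp only: power2_eq_square power_mult)
    then show False
      using power_eq_self_if_odd_period[OF assms(3,4)] assms(5) by blast
  qed
  moreover have "(x ^ q) ^ q \<noteq> x ^ q"
    using power_CHAR_power_inject[OF assms(1,2)] assms(5) by blast
  ultimately show ?thesis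
    using assms(5) by simp
qed

lemma c_Delta_le_c_delta:
  fixes f :: "'a::{field,finite} \<Rightarrow> 'a"
  assumes "\<not> (c = 1 \<and> a = 0)"
  shows "c_Delta f c a b \<le> c_delta f c"
proof -
  have "{c_Delta f c a b | a b. \<not> (c = 1 \<and> a = 0)} \<subseteq> range (case_prod (c_Delta f c))"
    by auto
  then have "finite {c_Delta f c a b | a b. \<not> (c = 1 \<and> a = 0)}"
    by (rule finite_subset) simp
  then show ?thesis
    unfolding c_delta_def using assms by (auto intro: Max_ge)
qed

lemma card_solutions_le_c_delta:
  fixes f :: "'a::{field,finite} \<Rightarrow> 'a"
  assumes "\<not> (c = 1 \<and> a = 0)" and "\<forall>x\<in>A. f (x + a) - c * f x = b"
  shows "card A \<le> c_delta f c"
proof -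
  have "card A \<le> c_Delta f c a b"
    unfolding c_Delta_def using assms(2) by (intro card_mono) auto
  also have "\<dots> \<le> c_delta f c"
    using assms(1) by (rule c_Delta_le_c_delta)
  finally show ?thesis .
qed

theorem proposition2p3:
  fixes F :: "'a::{field,finite} poly" and c a b :: 'a and p s m :: nat
  assumes "prime p" and "s > 0" and "m > 0"
    and "CARD('a) = p ^ (s * m)"
    and "\<forall>i. coeff F i \<in> subfield_of_order (p ^ s)"
    and "c \<in> subfield_of_order (p ^ s)"
    and "a \<in> subfield_of_order (p ^ s)" and "b \<in> subfield_of_order (p ^ s)"
    and "c = 1 \<longrightarrow> a \<noteq> 0"
  shows "(PcN (poly F) c \<longrightarrow>
            \<not> (\<exists>x. x \<notin> subfield_of_order (p ^ s) \<and> poly F (x + a) - c * poly F x = b))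
       \<and> (APcN (poly F) c \<and> odd m \<longrightarrow>
            \<not> (\<exists>x. x \<notin> subfield_of_order (p ^ s) \<and> poly F (x + a) - c * poly F x = b))"
proof -
  define q where "q = p ^ s"
  have subfield_iff: "z \<in> subfield_of_order (p ^ s) \<longleftrightarrow> z ^ q = z" for z :: 'a
    by (simp add: subfield_of_order_def q_def)
  have char: "CHAR('a) = p"
    using CHAR_eq_if_CARD_eq_prime_power assms(1,4) by blast
  have period: "x ^ (q ^ m) = x" for x :: 'a
    using power_card_eq_self[of x] assms(4) by (simp add: q_def power_mult)
  let ?sol = "\<lambda>x. poly F (x + a) - c * poly F x = b"
  have frobenius_sol: "?sol (x ^ q)" if "?sol x" for x
    using c_solution_power_closed[of q s F c a b x] that assms(1,5-8) char
    by (simp add: q_def subfield_iff)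
  have bound: "card A \<le> c_delta (poly F) c" if "\<forall>x\<in>A. ?sol x" for A
    using card_solutions_le_c_delta that assms(9) by blast
  show ?thesis
  proof (intro conjI impI notI; elim exE conjE)
    fix x assume "PcN (poly F) c" "x \<notin> subfield_of_order (p ^ s)" "?sol x"
    then show False
      using bound[of "{x, x ^ q}"] frobenius_sol by (simp add: PcN_def subfield_iff)
  next
    fix x assume "APcN (poly F) c" "odd m" "x \<notin> subfield_of_order (p ^ s)" "?sol x"
    then show False
      using bound[of "{x, x ^ q, (x ^ q) ^ q}"] frobenius_sol
        card_power_orbit_eq_3[of q s x m] assms(1) char period
      by (simp add: APcN_def subfield_iff q_def)
  qed
qed

end
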